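(* Let $n\ge 3$ and let $(\alpha,\beta)$ satisfy $\beta\ge 0$, $0<\alpha+\beta<n-\beta$ and $\frac{n-\alpha-2\beta}{2n}+\frac{n-\alpha}{2(n-1)}<1$. Let $1\le s\le t\le\infty$. Then, with constants depending only on $n,\alpha,\beta,s,t$: (i) If $1+\frac1t<\frac{n-\alpha}{n-1}+\frac1s$, then for all $f\in L^s(\mathbb R^{n-1})$ and $x_n>0$, $\|E_{\alpha,\beta}(f)(\cdot,x_n)\|_{L^t(\mathbb R^{n-1})}\lesssim x_n^{(n-1)(1+\frac1t-\frac1s)-(n-\alpha-\beta)}\|f\|_{L^s(\mathbb R^{n-1})}$. (ii) If $f\in L^1(\mathbb R^{n-1})$ with $\mathrm{supp}(f)\subset B_R(0)$, then for all $x=(x',x_n)\in\mathbb R^n_+$, $|E_{\alpha,\beta}(f)(x)|\lesssim \frac{x_n^\beta}{(((|x'|-R)^+)^2+x_n^2)^{\frac{n-\alpha}{2}}}\|f\|_{L^1(\mathbb R^{n-1})}$. (iii) If $f\in L^s(\mathbb R^{n-1})$ with $\mathrm{supp}(f)\subset \mathbb R^{n-1}\setminus B_R(0)$ and $\frac1s>\frac{\alpha-1}{n-1}$, then for all $x_n>0$, $\|E_{\alpha,\beta}(f)(\cdot,x_n)\|_{L^\infty(B_{R/2})}\lesssim x_n^\beta R^{(\alpha-1)-\frac{n-1}{s}}\|f\|_{L^s(\mathbb R^{n-1})}$; and if moreover $\frac1s>\frac{\alpha+\beta-1}{n-1}$, then $\|E_{\alpha,\beta}(f)\|_{L^\infty(B^+_{R/2})}\lesssim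 R^{\alpha+\beta-1-\frac{n-1}{s}}\|f\|_{L^s(\mathbb R^{n-1})}$.
   Context: $\mathbb R^n_+=\{(x',x_n):x'\in\mathbb R^{n-1},x_n>0\}$. For $f$ on $\mathbb R^{n-1}$, $E_{\alpha,\beta}(f)(x',x_n)=\int_{\mathbb R^{n-1}}\frac{x_n^\beta f(y')}{(x_n^2+|x'-y'|^2)^{\frac{n-\alpha}{2}}}\,\mathrm dy'$. $B_R=\{x'\in\mathbb R^{n-1}:|x'|<R\}$ and $B^+_R=\{(x',x_n)\in\mathbb R^n_+:\sqrt{|x'|^2+x_n^2}<R\}$. $(a)^+=\max\{a,0\}$. $A\lesssim B$ means $A\le CB$ for a constant $C$ independent of $f$, $R$ and $x$. *)

theory Defs
  imports "HOL-Analysis.Analysis" "HOL-Probability.Essential_Supremum"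
begin

definition recip :: "ereal \<Rightarrow> real" where
  "recip p = (if p = \<infinity> then 0 else 1 / real_of_ereal p)"

text \<open>The L^p norm of f with respect to the measure M (p in [1,\<infinity>]), valued in [0,\<infinity>].
  It is \<infinity> when f is not M-measurable; thus finiteness means membership in L^p(M).\<close>
definition Lp_norm :: "ereal \<Rightarrow> 'a measure \<Rightarrow> ('a \<Rightarrow> real) \<Rightarrow> ennreal" where
  "Lp_norm p M f =
     (if f \<notin> borel_measurable M then \<infinity>
      else if p = \<infinity> then e2ennreal (esssup M (\<lambda>x. ereal \<bar>f x\<bar>))
      else (let I = (\<integral>\<^sup>+ x. ennreal (\<bar>f x\<bar> powr real_of_ereal p) \<partial>M)
            in if I = \<infinity> then \<infinity> else ennreal (enn2real I powr (1 / real_of_ereal p))))"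

text \<open>The extension operator E_{\<alpha>,\<beta>}; the boundary space R^{n-1} is the euclidean space 'a
  (n = DIM('a) + 1), a point of the upper half space is (x', x_n).\<close>
definition E_op :: "real \<Rightarrow> real \<Rightarrow> ('a::euclidean_space \<Rightarrow> real) \<Rightarrow> 'a \<times> real \<Rightarrow> real" where
  "E_op \<alpha> \<beta> f = (\<lambda>(x', xn). \<integral>y. xn powr \<beta> * f y /
       (xn\<^sup>2 + (norm (x' - y))\<^sup>2) powr ((real DIM('a) + 1 - \<alpha>) / 2) \<partial>lebesgue)"

definition half_ball :: "real \<Rightarrow> ('a::euclidean_space \<times> real) set" where
  "half_ball R = {(x', xn). xn > 0 \<and> sqrt ((norm x')\<^sup>2 + xn\<^sup>2) < R}"

end

theory Submission
  imports Defs
begin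

(*
  For fixed x_n > 0, E_{alpha,beta} f (., x_n) is the convolution of f with the kernel
  k(z) = x_n^beta (x_n^2 + |z|^2)^(-(n - alpha)/2), and
  k(z) <= min (x_n^(beta - (n - alpha)), x_n^beta |z|^(-(n - alpha))).

  (i) is Young's inequality for integral operators with 1/q = 1 + 1/t - 1/s. Splitting k^q at
  |z| = x_n and summing |z|^(-b) over dyadic shells gives
  ||k||_q <= C x_n^((n - 1)/q + beta - (n - alpha)) exactly when (n - 1)/q < n - alpha,
  which is the hypothesis of (i).

  (ii) holds because |x' - y'| >= (|x'| - R)^+ on the support of f.

  (iii) is Hoelder's inequality with the exponent q conjugate to s: if |x'| < R/2 and |y'| >= R
  then |x' - y'| >= |y'|/2, so on the support of f the kernel is at most
  2^(n - alpha) x_n^beta |y'|^(-(n - alpha)), whose L^q norm over {|y'| >= R} is a constant times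
  R^((n - 1)/q - (n - alpha)). On B^+_{R/2} moreover x_n < R.
*)

lemma measurable_lebesgue_borel [measurable (raw)]:
  "f \<in> M \<rightarrow>\<^sub>M (lebesgue :: 'a::euclidean_space measure) \<Longrightarrow> f \<in> M \<rightarrow>\<^sub>M borel"
  by (erule measurable_compose[where g = "\<lambda>x. x"]) (simp add: measurable_completion)

lemma measurable_lebesgue_fst [measurable (raw)]:
  "f \<in> M \<rightarrow>\<^sub>M (lebesgue :: ('a::euclidean_space \<times> 'b::euclidean_space) measure)
    \<Longrightarrow> (\<lambda>x. fst (f x)) \<in> M \<rightarrow>\<^sub>M borel"
  by (rule measurable_compose[OF measurable_lebesgue_borel[of f]])
    (auto intro!: borel_measurable_continuous_onI continuous_intros)

lemma measurable_lebesgue_snd [measurable (raw)]: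
  "f \<in> M \<rightarrow>\<^sub>M (lebesgue :: ('a::euclidean_space \<times> 'b::euclidean_space) measure)
    \<Longrightarrow> (\<lambda>x. snd (f x)) \<in> M \<rightarrow>\<^sub>M borel"
  by (rule measurable_compose[OF measurable_lebesgue_borel[of f]])
    (auto intro!: borel_measurable_continuous_onI continuous_intros)

lemma sigma_finite_lebesgue: "sigma_finite_measure (lebesgue :: 'a::euclidean_space measure)"
proof -
  obtain A :: "'a set set" where "countable A" "A \<subseteq> sets lborel" "\<Union>A = space lborel"
      "\<forall>a\<in>A. emeasure lborel a \<noteq> \<infinity>"
    using sigma_finite_measure.sigma_finite_countable[OF sigma_finite_lborel] by blast
  then show ?thesis
    by (intro sigma_finite_measure.intro exI[of _ A]) auto
qed

lemma sets_lebesgue_ball [measurable]: "ball c r \<in> sets lebesgue"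
  by (intro sets_completionI_sets) simp

lemma nn_integral_lebesgue_affine:
  fixes f :: "'a::euclidean_space \<Rightarrow> ennreal" and c :: real
  assumes f[measurable]: "f \<in> borel_measurable lebesgue" and c: "c \<noteq> 0"
  shows "(\<integral>\<^sup>+x. f x \<partial>lebesgue) = ennreal (\<bar>c\<bar> ^ DIM('a)) * (\<integral>\<^sup>+x. f (t + c *\<^sub>R x) \<partial>lebesgue)"
proof -
  let ?T = "\<lambda>x::'a. t + c *\<^sub>R x"
  have T: "(\<lambda>x. t + (\<Sum>j\<in>Basis. (c * (x \<bullet> j)) *\<^sub>R j)) = ?T"
    unfolding scaleR_scaleR[symmetric] scaleR_sum_right[symmetric]
    by (simp add: euclidean_representation)
  have T_meas: "?T \<in> lebesgue \<rightarrow>\<^sub>M lebesgue"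
    using lebesgue_affine_measurable[of "\<lambda>_. c" t] c by (simp add: T)
  have "(\<integral>\<^sup>+x. f x \<partial>lebesgue)
      = (\<integral>\<^sup>+x. f x \<partial>density (distr lebesgue lebesgue ?T) (\<lambda>_. ennreal (\<bar>c\<bar> ^ DIM('a))))"
    using lebesgue_affine_euclidean[of "\<lambda>_. c" t] c by (simp add: T)
  also have "\<dots> = ennreal (\<bar>c\<bar> ^ DIM('a)) * integral\<^sup>N (distr lebesgue lebesgue ?T) f"
    by (simp add: nn_integral_density nn_integral_cmult)
  also have "\<dots> = ennreal (\<bar>c\<bar> ^ DIM('a)) * (\<integral>\<^sup>+x. f (?T x) \<partial>lebesgue)"
    using T_meas by (simp add: nn_integral_distr)
  finally show ?thesis .
qed

lemma nn_integral_lebesgue_reflect: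
  fixes f :: "'a::euclidean_space \<Rightarrow> ennreal"
  assumes "f \<in> borel_measurable lebesgue"
  shows "(\<integral>\<^sup>+y. f (x - y) \<partial>lebesgue) = (\<integral>\<^sup>+y. f y \<partial>lebesgue)"
  using nn_integral_lebesgue_affine[OF assms, of "-1" x] by simp

section \<open>Exponents and \<open>L\<^sup>p\<close> norms\<close>

lemma recip_ereal [simp]: "recip (ereal p) = 1 / p"
  by (simp add: recip_def)

lemma recip_infinity [simp]: "recip \<infinity> = 0"
  by (simp add: recip_def)

lemma recip_one [simp]: "recip 1 = 1"
  by (simp add: recip_def)

lemma recip_ge_one_bounds:
  assumes "1 \<le> s"
  shows "0 \<le> recip s" "recip s \<le> 1"
  using assms by (cases s; simp add: recip_def)+

lemma recip_antimono:
  assumes "1 \<le> s" "s \<le> t"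
  shows "recip t \<le> recip s"
  using assms by (cases s; cases t) (auto simp: recip_def frac_le)

lemma ex_recip_eq:
  assumes "0 \<le> r" "r \<le> 1"
  obtains q where "1 \<le> q" "recip q = r"
proof (cases "r = 0")
  case True
  then show ?thesis using that[of \<infinity>] by simp
next
  case False
  then show ?thesis using that[of "ereal (1 / r)"] assms by simp
qed

lemma ereal_ge_one_cases:
  fixes s :: ereal
  assumes "1 \<le> s"
  obtains "s = \<infinity>" | "s = 1" | p where "s = ereal p" "1 < p"
proof (cases s)
  case (real r)
  then show ?thesis using assms that by (cases "r = 1") (auto simp: one_ereal_def)
qed (use assms that in auto)

lemma Lp_norm_ereal_eq:
  assumes "f \<in> borel_measurable M" "(\<integral>\<^sup>+x. ennreal (\<bar>f x\<bar> powr p) \<partial>M) = ennreal D" "0 \<le> D"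
  shows "Lp_norm (ereal p) M f = ennreal (D powr (1 / p))"
  using assms by (simp add: Lp_norm_def Let_def)

lemma Lp_norm_ereal_eq_top:
  assumes "f \<in> borel_measurable M" "(\<integral>\<^sup>+x. ennreal (\<bar>f x\<bar> powr p) \<partial>M) = \<infinity>"
  shows "Lp_norm (ereal p) M f = \<infinity>"
  using assms by (simp add: Lp_norm_def Let_def)

lemma Lp_norm_ereal_eq_0_iff:
  assumes "f \<in> borel_measurable M"
  shows "Lp_norm (ereal p) M f = 0 \<longleftrightarrow> (\<integral>\<^sup>+x. ennreal (\<bar>f x\<bar> powr p) \<partial>M) = 0"
proof (cases "\<integral>\<^sup>+x. ennreal (\<bar>f x\<bar> powr p) \<partial>M" rule: ennreal_cases)
  case (real D)
  then show ?thesis using assms by (simp add: Lp_norm_ereal_eq)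
next
  case top
  then show ?thesis using Lp_norm_ereal_eq_top[OF assms] by simp
qed

lemma Lp_norm_one:
  assumes "f \<in> borel_measurable M"
  shows "Lp_norm 1 M f = (\<integral>\<^sup>+x. ennreal \<bar>f x\<bar> \<partial>M)"
proof (cases "\<integral>\<^sup>+x. ennreal \<bar>f x\<bar> \<partial>M" rule: ennreal_cases)
  case (real D)
  then show ?thesis using Lp_norm_ereal_eq[OF assms, of 1 D] by (simp add: one_ereal_def)
next
  case top
  then show ?thesis using Lp_norm_ereal_eq_top[OF assms, of 1] by (simp add: one_ereal_def)
qed

lemma Lp_norm_le_iff:
  assumes "f \<in> borel_measurable M" "0 < p" "0 \<le> B"
  shows "Lp_norm (ereal p) M f \<le> ennreal B
    \<longleftrightarrow> (\<integral>\<^sup>+x. ennreal (\<bar>f x\<bar> powr p) \<partial>M) \<le> ennreal (B powr p)"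
proof (cases "\<integral>\<^sup>+x. ennreal (\<bar>f x\<bar> powr p) \<partial>M" rule: ennreal_cases)
  case (real D)
  have "D powr (1 / p) \<le> B \<longleftrightarrow> D \<le> B powr p"
  proof
    assume "D powr (1 / p) \<le> B"
    then have "(D powr (1 / p)) powr p \<le> B powr p" using assms by (intro powr_mono2) auto
    then show "D \<le> B powr p" using assms real by (simp add: powr_powr)
  next
    assume "D \<le> B powr p"
    then have "D powr (1 / p) \<le> (B powr p) powr (1 / p)" using assms real by (intro powr_mono2) auto
    then show "D powr (1 / p) \<le> B" using assms by (simp add: powr_powr)
  qed
  then show ?thesis using assms real by (simp add: Lp_norm_ereal_eq)
next
  case top
  then show ?thesis using Lp_norm_ereal_eq_top[OF assms(1)] by (simp add: top_unique)
qed

lemma Lp_norm_le_of_nn_integral_powr_le: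
  assumes "f \<in> borel_measurable M" "0 < p" "0 \<le> C" "0 \<le> X"
    and "(\<integral>\<^sup>+x. ennreal (\<bar>f x\<bar> powr p) \<partial>M) \<le> ennreal (C * X powr p)"
  shows "Lp_norm (ereal p) M f \<le> ennreal (C powr (1 / p) * X)"
proof -
  have "(C powr (1 / p) * X) powr p = C * X powr p"
    using assms by (simp add: powr_mult powr_powr)
  then show ?thesis using assms by (simp add: Lp_norm_le_iff)
qed

lemma Lp_norm_infinity_le:
  assumes "f \<in> borel_measurable M" "\<And>x. x \<in> space M \<Longrightarrow> ennreal \<bar>f x\<bar> \<le> c"
  shows "Lp_norm \<infinity> M f \<le> c"
proof (cases c rule: ennreal_cases)
  case (real z)
  then have "AE x in M. ereal \<bar>f x\<bar> \<le> ereal z"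
    using assms(2) by (intro AE_I2) (simp add: ennreal_le_iff)
  then have "esssup M (\<lambda>x. ereal \<bar>f x\<bar>) \<le> ereal z"
    using assms(1) by (intro esssup_I) auto
  then have "e2ennreal (esssup M (\<lambda>x. ereal \<bar>f x\<bar>)) \<le> e2ennreal (ereal z)"
    by (rule e2ennreal_mono)
  then show ?thesis using assms(1) real by (simp add: Lp_norm_def e2ennreal_ereal)
qed simp

lemma AE_le_Lp_norm_infinity:
  assumes "f \<in> borel_measurable M"
  shows "AE x in M. ennreal \<bar>f x\<bar> \<le> Lp_norm \<infinity> M f"
  using esssup_AE[of "\<lambda>x. ereal \<bar>f x\<bar>" M]
proof eventually_elim
  case (elim x)
  then have "e2ennreal (ereal \<bar>f x\<bar>) \<le> e2ennreal (esssup M (\<lambda>x. ereal \<bar>f x\<bar>))"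
    by (rule e2ennreal_mono)
  then show ?case using assms by (simp add: Lp_norm_def e2ennreal_ereal)
qed

lemma AE_eq_0_of_nn_integral_powr_eq_0:
  assumes [measurable]: "f \<in> borel_measurable M"
    and "(\<integral>\<^sup>+x. ennreal (\<bar>f x\<bar> powr p) \<partial>M) = 0"
  shows "AE x in M. f x = 0"
proof -
  have "AE x in M. ennreal (\<bar>f x\<bar> powr p) = 0"
    using assms(2) by (subst (asm) nn_integral_0_iff_AE) auto
  then show ?thesis by eventually_elim simp
qed

section \<open>Hoelder's inequality\<close>

lemma weighted_am_gm:
  fixes X Y a b :: real
  assumes "0 \<le> X" "0 \<le> Y" "0 \<le> a" "0 \<le> b" "a + b = 1"
  shows "X powr a * Y powr b \<le> a * X + b * Y"
  using Youngs_inequality_0[of a b X Y] assms by (cases "X = 0 \<or> Y = 0") auto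

lemma nn_integral_powr_mult_le:
  fixes u v :: "'a \<Rightarrow> real"
  assumes [measurable]: "u \<in> borel_measurable M" "v \<in> borel_measurable M"
    and nonneg: "\<And>x. 0 \<le> u x" "\<And>x. 0 \<le> v x"
    and weights: "0 \<le> a" "0 \<le> b" "a + b = 1"
    and U: "(\<integral>\<^sup>+x. ennreal (u x) \<partial>M) \<le> ennreal U" "0 < U"
    and V: "(\<integral>\<^sup>+x. ennreal (v x) \<partial>M) \<le> ennreal V" "0 < V"
  shows "(\<integral>\<^sup>+x. ennreal (u x powr a * v x powr b) \<partial>M) \<le> ennreal (U powr a * V powr b)"
proof -
  define c where "c = U powr a * V powr b"
  define k l where "k = c * a / U" and "l = c * b / V"
  have c: "0 < c" using U V by (simp add: c_def)
  have kl: "0 \<le> k" "0 \<le> l" using c weights U V by (simp_all add: k_def l_def)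
  have pointwise: "u x powr a * v x powr b \<le> k * u x + l * v x" for x
  proof -
    have "u x powr a * v x powr b / c = (u x / U) powr a * (v x / V) powr b"
      using nonneg U V by (simp add: powr_divide c_def)
    also have "\<dots> \<le> a * (u x / U) + b * (v x / V)"
      using weighted_am_gm[of "u x / U" "v x / V" a b] nonneg weights U V by simp
    finally show ?thesis
      using c by (simp add: pos_divide_le_eq k_def l_def algebra_simps)
  qed
  have "(\<integral>\<^sup>+x. ennreal (u x powr a * v x powr b) \<partial>M)
      \<le> (\<integral>\<^sup>+x. ennreal k * ennreal (u x) + ennreal l * ennreal (v x) \<partial>M)"
  proof (rule nn_integral_mono)
    fix x
    have "ennreal (u x powr a * v x powr b) \<le> ennreal (k * u x + l * v x)"
      by (rule ennreal_leI[OF pointwise])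
    also have "\<dots> = ennreal k * ennreal (u x) + ennreal l * ennreal (v x)"
      using nonneg kl by (simp add: ennreal_plus ennreal_mult)
    finally show "ennreal (u x powr a * v x powr b)
      \<le> ennreal k * ennreal (u x) + ennreal l * ennreal (v x)" .
  qed
  also have "\<dots> = ennreal k * (\<integral>\<^sup>+x. ennreal (u x) \<partial>M) + ennreal l * (\<integral>\<^sup>+x. ennreal (v x) \<partial>M)"
    by (simp add: nn_integral_add nn_integral_cmult)
  also have "\<dots> \<le> ennreal k * ennreal U + ennreal l * ennreal V"
    using U V by (intro add_mono mult_left_mono) auto
  also have "\<dots> = ennreal (k * U + l * V)"
    using kl U V by (simp add: ennreal_plus ennreal_mult)
  also have "k * U + l * V = c"
    using weights U V by (simp add: k_def l_def distrib_left[symmetric])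
  finally show ?thesis by (simp add: c_def)
qed

lemma nn_integral_powr_mult3_le:
  fixes u v w :: "'a \<Rightarrow> real"
  assumes [measurable]: "u \<in> borel_measurable M" "v \<in> borel_measurable M" "w \<in> borel_measurable M"
    and nonneg: "\<And>x. 0 \<le> u x" "\<And>x. 0 \<le> v x" "\<And>x. 0 \<le> w x"
    and weights: "0 \<le> \<theta>" "0 \<le> a" "0 \<le> b" "\<theta> + a + b = 1"
    and U: "(\<integral>\<^sup>+x. ennreal (u x) \<partial>M) \<le> ennreal U" "0 < U"
    and V: "(\<integral>\<^sup>+x. ennreal (v x) \<partial>M) \<le> ennreal V" "0 < V"
    and W: "(\<integral>\<^sup>+x. ennreal (w x) \<partial>M) \<le> ennreal W" "0 < W"
  shows "(\<integral>\<^sup>+x. ennreal (u x powr \<theta> * v x powr a * w x powr b) \<partial>M)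
    \<le> ennreal (U powr \<theta> * V powr a * W powr b)"
proof (cases "a + b = 0")
  case True
  then have "a = 0" "b = 0" "\<theta> = 1" using weights by auto
  then have "(\<integral>\<^sup>+x. ennreal (u x powr \<theta> * v x powr a * w x powr b) \<partial>M) \<le> (\<integral>\<^sup>+x. ennreal (u x) \<partial>M)"
    using nonneg by (intro nn_integral_mono ennreal_leI) (auto simp: mult_le_cancel_left1)
  with U V W \<open>a = 0\<close> \<open>b = 0\<close> \<open>\<theta> = 1\<close> show ?thesis by simp
next
  case False
  \<comment> \<open>Two-factor Hoelder with weights \<open>\<theta>\<close> and \<open>a + b\<close>, the second factor being
    itself a two-factor Hoelder product.\<close>
  define a' b' where "a' = a / (a + b)" and "b' = b / (a + b)"
  have ab: "0 < a + b" using False weights by simp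
  have ab': "0 \<le> a'" "0 \<le> b'" "a' + b' = 1"
    using weights ab by (auto simp: a'_def b'_def add_divide_distrib[symmetric])
  have inner: "(\<integral>\<^sup>+x. ennreal (v x powr a' * w x powr b') \<partial>M) \<le> ennreal (V powr a' * W powr b')"
    using V W nonneg ab' by (intro nn_integral_powr_mult_le) auto
  have "(\<integral>\<^sup>+x. ennreal (u x powr \<theta> * (v x powr a' * w x powr b') powr (a + b)) \<partial>M)
      \<le> ennreal (U powr \<theta> * (V powr a' * W powr b') powr (a + b))"
    using U V W nonneg weights ab ab' inner
    by (intro nn_integral_powr_mult_le[where v = "\<lambda>x. v x powr a' * w x powr b'"]) auto
  moreover have "(x powr a' * y powr b') powr (a + b) = x powr a * y powr b"
    if "0 \<le> x" "0 \<le> y" for x y :: real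
    using that ab by (simp add: powr_mult powr_powr a'_def b'_def)
  ultimately show ?thesis using nonneg U V W by (simp add: mult.assoc)
qed

lemma Holder_inequality_infinity_one:
  assumes [measurable]: "f \<in> borel_measurable M" "g \<in> borel_measurable M"
  shows "(\<integral>\<^sup>+x. ennreal (\<bar>g x\<bar> * \<bar>f x\<bar>) \<partial>M) \<le> Lp_norm \<infinity> M g * Lp_norm 1 M f"
proof -
  have "(\<integral>\<^sup>+x. ennreal (\<bar>g x\<bar> * \<bar>f x\<bar>) \<partial>M) \<le> (\<integral>\<^sup>+x. Lp_norm \<infinity> M g * ennreal \<bar>f x\<bar> \<partial>M)"
    using AE_le_Lp_norm_infinity[of g M]
    by (intro nn_integral_mono_AE) (auto elim!: eventually_mono simp: ennreal_mult mult_right_mono)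
  also have "\<dots> = Lp_norm \<infinity> M g * Lp_norm 1 M f"
    by (simp add: nn_integral_cmult Lp_norm_one)
  finally show ?thesis .
qed

lemma Holder_inequality_finite:
  assumes pq: "0 < p" "0 < q" "1 / p + 1 / q = 1"
    and [measurable]: "f \<in> borel_measurable M" "g \<in> borel_measurable M"
  shows "(\<integral>\<^sup>+x. ennreal (\<bar>g x\<bar> * \<bar>f x\<bar>) \<partial>M) \<le> Lp_norm (ereal q) M g * Lp_norm (ereal p) M f"
proof -
  let ?G = "\<integral>\<^sup>+x. ennreal (\<bar>g x\<bar> powr q) \<partial>M" and ?D = "\<integral>\<^sup>+x. ennreal (\<bar>f x\<bar> powr p) \<partial>M"
  consider (zero) "?G = 0 \<or> ?D = 0" | (top) "?G \<noteq> 0" "?D \<noteq> 0" "?G = \<infinity> \<or> ?D = \<infinity>"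
    | (finite) G D where "?G = ennreal G" "?D = ennreal D" "0 < G" "0 < D"
    by (cases ?G rule: ennreal_cases; cases ?D rule: ennreal_cases) force+
  then show ?thesis
  proof cases
    case zero
    then have "AE x in M. ennreal (\<bar>g x\<bar> * \<bar>f x\<bar>) = 0"
      by (auto dest!: AE_eq_0_of_nn_integral_powr_eq_0[rotated] elim!: eventually_mono)
    then show ?thesis by (simp add: nn_integral_0_iff_AE[THEN iffD2])
  next
    case top
    then have "Lp_norm (ereal q) M g \<noteq> 0" "Lp_norm (ereal p) M f \<noteq> 0"
      "Lp_norm (ereal q) M g = \<infinity> \<or> Lp_norm (ereal p) M f = \<infinity>"
      by (auto simp: Lp_norm_ereal_eq_0_iff Lp_norm_ereal_eq_top)
    then show ?thesis by (auto simp: ennreal_mult_eq_top_iff top_unique)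
  next
    case finite
    have "(\<integral>\<^sup>+x. ennreal ((\<bar>g x\<bar> powr q) powr (1 / q) * (\<bar>f x\<bar> powr p) powr (1 / p)) \<partial>M)
        \<le> ennreal (G powr (1 / q) * D powr (1 / p))"
      using finite pq by (intro nn_integral_powr_mult_le) auto
    moreover have "(\<bar>z\<bar> powr r) powr (1 / r) = \<bar>z\<bar>" if "0 < r" for z r :: real
      using that by (simp add: powr_powr)
    ultimately show ?thesis
      using finite pq by (simp add: Lp_norm_ereal_eq ennreal_mult)
  qed
qed

lemma Holder_inequality:
  assumes "1 \<le> p" "1 \<le> q" "recip p + recip q = 1"
    and [measurable]: "f \<in> borel_measurable M" "g \<in> borel_measurable M"
  shows "(\<integral>\<^sup>+x. ennreal (\<bar>g x\<bar> * \<bar>f x\<bar>) \<partial>M) \<le> Lp_norm q M g * Lp_norm p M f"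
  using assms(1)
proof (cases rule: ereal_ge_one_cases)
  case 1
  with assms(2,3) have "q = 1"
    by (cases rule: ereal_ge_one_cases[OF assms(2)]) auto
  then show ?thesis
    using Holder_inequality_infinity_one[of g M f] 1 by (simp add: mult.commute)
next
  case 2
  with assms(2,3) have "q = \<infinity>"
    by (cases rule: ereal_ge_one_cases[OF assms(2)]) auto
  then show ?thesis using Holder_inequality_infinity_one[of f M g] 2 by simp
next
  case (3 p')
  with assms(2,3) obtain q' where "q = ereal q'" "1 < q'"
    by (cases rule: ereal_ge_one_cases[OF assms(2)]) auto
  with 3 assms(3) show ?thesis using Holder_inequality_finite[of p' q' f M g] by simp
qed

section \<open>Young's inequality for integral operators\<close>

lemma powr_mult_split_weights:
  fixes x y q p \<theta> a b :: real
  assumes "0 \<le> x" "0 \<le> y" "q * (\<theta> + a) = 1" "p * (\<theta> + b) = 1"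
  shows "(x powr q * y powr p) powr \<theta> * (x powr q) powr a * (y powr p) powr b = x * y"
proof (cases "x = 0 \<or> y = 0")
  case False
  then have "(x powr q * y powr p) powr \<theta> * (x powr q) powr a * (y powr p) powr b
      = x powr (q * \<theta>) * y powr (p * \<theta>) * x powr (q * a) * y powr (p * b)"
    using assms by (simp add: powr_mult powr_powr)
  also have "\<dots> = x powr (q * (\<theta> + a)) * y powr (p * (\<theta> + b))"
    by (simp add: distrib_left powr_add mult_ac)
  finally show ?thesis using assms by simp
qed auto

lemma Youngs_inequality_pointwise:
  fixes k f :: "'a \<Rightarrow> real" and z \<theta> a b p q t B D :: real
  assumes [measurable]: "k \<in> borel_measurable N" "f \<in> borel_measurable N"
    and k_nonneg: "\<And>y. 0 \<le> k y"
    and z: "ennreal \<bar>z\<bar> \<le> (\<integral>\<^sup>+y. ennreal (k y * \<bar>f y\<bar>) \<partial>N)"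
    and weights: "0 < \<theta>" "0 \<le> a" "0 \<le> b" "\<theta> + a + b = 1"
    and exps: "q * (\<theta> + a) = 1" "p * (\<theta> + b) = 1" "t * \<theta> = 1"
    and B: "(\<integral>\<^sup>+y. ennreal (k y powr q) \<partial>N) \<le> ennreal B" "0 < B"
    and D: "(\<integral>\<^sup>+y. ennreal (\<bar>f y\<bar> powr p) \<partial>N) \<le> ennreal D" "0 < D"
  shows "ennreal (\<bar>z\<bar> powr t)
    \<le> ennreal (B powr (a * t) * D powr (b * t)) * (\<integral>\<^sup>+y. ennreal (k y powr q * \<bar>f y\<bar> powr p) \<partial>N)"
proof -
  let ?u = "\<lambda>y. k y powr q * \<bar>f y\<bar> powr p"
  have factor: "k y * \<bar>f y\<bar> = ?u y powr \<theta> * (k y powr q) powr a * (\<bar>f y\<bar> powr p) powr b" for y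
    using powr_mult_split_weights[of "k y" "\<bar>f y\<bar>" q \<theta> a p b] k_nonneg exps by simp
  have t: "0 < t" using weights(1) exps(3) by (metis zero_less_mult_pos2 zero_less_one)
  show ?thesis
  proof (cases "\<integral>\<^sup>+y. ennreal (?u y) \<partial>N" rule: ennreal_cases)
    case top
    then show ?thesis using B D by (simp add: ennreal_mult_top)
  next
    case (real A)
    show ?thesis
    proof (cases "A = 0")
      case True
      have u: "(\<lambda>y. ennreal (?u y)) \<in> borel_measurable N" by measurable
      have "AE y in N. ennreal (?u y) = 0"
        by (rule nn_integral_0_iff_AE[OF u, THEN iffD1]) (simp add: real True)
      then have "AE y in N. ennreal (k y * \<bar>f y\<bar>) = 0"
        by eventually_elim auto
      then have "z = 0" using z by (simp add: nn_integral_0_iff_AE[THEN iffD2])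
      then show ?thesis by simp
    next
      case False
      then have A: "0 < A" using real by simp
      have "ennreal \<bar>z\<bar> \<le> (\<integral>\<^sup>+y. ennreal (?u y powr \<theta> * (k y powr q) powr a * (\<bar>f y\<bar> powr p) powr b) \<partial>N)"
        using z by (simp only: factor)
      also have "\<dots> \<le> ennreal (A powr \<theta> * B powr a * D powr b)"
        using real A B D weights by (intro nn_integral_powr_mult3_le) auto
      finally have "\<bar>z\<bar> \<le> A powr \<theta> * B powr a * D powr b"
        by (subst (asm) ennreal_le_iff) auto
      then have "\<bar>z\<bar> powr t \<le> (A powr \<theta> * B powr a * D powr b) powr t"
        using t by (intro powr_mono2) auto
      also have "\<dots> = B powr (a * t) * D powr (b * t) * A"
        using A B D exps by (simp add: powr_mult powr_powr mult.commute)
      finally show ?thesis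
        using real A B D by (simp add: ennreal_mult[symmetric] ennreal_leI)
    qed
  qed
qed

lemma nn_integral_powr_le_Youngs:
  fixes K :: "'a \<Rightarrow> 'b \<Rightarrow> real" and f :: "'b \<Rightarrow> real" and h :: "'a \<Rightarrow> real"
    and p q t B D :: real
  assumes "sigma_finite_measure M" "sigma_finite_measure N"
    and K[measurable]: "(\<lambda>(x, y). K x y) \<in> borel_measurable (M \<Otimes>\<^sub>M N)"
    and K_nonneg: "\<And>x y. 0 \<le> K x y"
    and [measurable]: "f \<in> borel_measurable N"
    and h: "\<And>x. x \<in> space M \<Longrightarrow> ennreal \<bar>h x\<bar> \<le> (\<integral>\<^sup>+y. ennreal (K x y * \<bar>f y\<bar>) \<partial>N)"
    and exps: "1 \<le> p" "p \<le> t" "0 < q" "1 / q = 1 + 1 / t - 1 / p"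
    and rows: "\<And>x. x \<in> space M \<Longrightarrow> (\<integral>\<^sup>+y. ennreal (K x y powr q) \<partial>N) \<le> ennreal (B powr q)"
    and cols: "\<And>y. y \<in> space N \<Longrightarrow> (\<integral>\<^sup>+x. ennreal (K x y powr q) \<partial>M) \<le> ennreal (B powr q)"
    and B: "0 < B"
    and D: "(\<integral>\<^sup>+y. ennreal (\<bar>f y\<bar> powr p) \<partial>N) \<le> ennreal D" "0 < D"
  shows "(\<integral>\<^sup>+x. ennreal (\<bar>h x\<bar> powr t) \<partial>M) \<le> ennreal ((B * D powr (1 / p)) powr t)"
proof -
  interpret pair_sigma_finite M N
    using assms(1,2) by (simp add: pair_sigma_finite_def)
  define \<theta> a b where "\<theta> = 1 / t" and "a = 1 - 1 / p" and "b = 1 / p - 1 / t"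
  have t: "0 < t" using exps by simp
  have weights: "0 < \<theta>" "0 \<le> a" "0 \<le> b" "\<theta> + a + b = 1"
    using exps t by (auto simp: \<theta>_def a_def b_def frac_le)
  have qa: "q * (\<theta> + a) = 1" using exps by (simp add: \<theta>_def a_def field_simps)
  have pb: "p * (\<theta> + b) = 1" using exps by (simp add: \<theta>_def b_def)
  have t\<theta>: "t * \<theta> = 1" using t by (simp add: \<theta>_def)
  have K_row[measurable]: "K x \<in> borel_measurable N" if "x \<in> space M" for x
    using measurable_Pair2[OF K that] by simp
  define c where "c = (B powr q) powr (a * t) * D powr (b * t)"
  let ?F = "\<lambda>x y. ennreal (K x y powr q * \<bar>f y\<bar> powr p)"
  have "(\<integral>\<^sup>+x. ennreal (\<bar>h x\<bar> powr t) \<partial>M) \<le> (\<integral>\<^sup>+x. ennreal c * (\<integral>\<^sup>+y. ?F x y \<partial>N) \<partial>M)"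
    unfolding c_def using B D weights qa pb t\<theta> K_nonneg h rows
    by (intro nn_integral_mono Youngs_inequality_pointwise) auto
  also have "\<dots> = ennreal c * (\<integral>\<^sup>+y. (\<integral>\<^sup>+x. ?F x y \<partial>M) \<partial>N)"
    by (simp add: nn_integral_cmult Fubini')
  also have "\<dots> \<le> ennreal c * (\<integral>\<^sup>+y. ennreal (B powr q) * ennreal (\<bar>f y\<bar> powr p) \<partial>N)"
  proof (intro mult_left_mono nn_integral_mono)
    fix y assume "y \<in> space N"
    then show "(\<integral>\<^sup>+x. ?F x y \<partial>M) \<le> ennreal (B powr q) * ennreal (\<bar>f y\<bar> powr p)"
      using cols by (simp add: ennreal_mult nn_integral_multc mult_right_mono)
  qed simp
  also have "\<dots> \<le> ennreal (c * B powr q * D)"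
    using D B by (simp add: nn_integral_cmult ennreal_mult c_def mult.assoc mult_left_mono)
  also have "c * B powr q * D = B powr (q * (a * t) + q) * D powr (b * t + 1)"
    using D by (simp add: c_def powr_powr powr_add mult_ac)
  also have "q * (a * t) + q = t * (q * (\<theta> + a))"
    using t by (simp add: \<theta>_def field_simps)
  also have "b * t + 1 = t / p * (p * (\<theta> + b))"
    using t exps by (simp add: \<theta>_def field_simps)
  finally show ?thesis using B D qa pb by (simp add: powr_mult powr_powr)
qed

lemma Youngs_inequality_integral_operator_finite:
  fixes K :: "'a \<Rightarrow> 'b \<Rightarrow> real" and f :: "'b \<Rightarrow> real" and h :: "'a \<Rightarrow> real"
    and p q t B :: real
  assumes "sigma_finite_measure M" "sigma_finite_measure N"
    and K[measurable]: "(\<lambda>(x, y). K x y) \<in> borel_measurable (M \<Otimes>\<^sub>M N)"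
    and K_nonneg: "\<And>x y. 0 \<le> K x y"
    and [measurable]: "f \<in> borel_measurable N" "h \<in> borel_measurable M"
    and h: "\<And>x. x \<in> space M \<Longrightarrow> ennreal \<bar>h x\<bar> \<le> (\<integral>\<^sup>+y. ennreal (K x y * \<bar>f y\<bar>) \<partial>N)"
    and exps: "1 \<le> p" "p \<le> t" "0 < q" "1 / q = 1 + 1 / t - 1 / p"
    and rows: "\<And>x. x \<in> space M \<Longrightarrow> (\<integral>\<^sup>+y. ennreal (K x y powr q) \<partial>N) \<le> ennreal (B powr q)"
    and cols: "\<And>y. y \<in> space N \<Longrightarrow> (\<integral>\<^sup>+x. ennreal (K x y powr q) \<partial>M) \<le> ennreal (B powr q)"
    and B: "0 < B"
  shows "Lp_norm (ereal t) M h \<le> ennreal B * Lp_norm (ereal p) N f"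
proof (cases "\<integral>\<^sup>+y. ennreal (\<bar>f y\<bar> powr p) \<partial>N" rule: ennreal_cases)
  case top
  then show ?thesis using B by (simp add: Lp_norm_ereal_eq_top ennreal_mult_top)
next
  case (real D)
  have t: "0 < t" using exps by simp
  show ?thesis
  proof (cases "D = 0")
    case True
    then have "AE y in N. f y = 0"
      using real by (intro AE_eq_0_of_nn_integral_powr_eq_0[of f N p]) auto
    then have "(\<integral>\<^sup>+y. ennreal (K x y * \<bar>f y\<bar>) \<partial>N) = 0" if "x \<in> space M" for x
      using that measurable_Pair2[OF K that]
      by (subst nn_integral_0_iff_AE) (auto elim!: eventually_mono)
    then have "h x = 0" if "x \<in> space M" for x
      using h[OF that] that by simp
    then have "Lp_norm (ereal t) M h = 0"
      using t by (subst Lp_norm_ereal_eq[of _ _ _ 0]) (simp_all cong: nn_integral_cong)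
    then show ?thesis by simp
  next
    case False
    then have "(\<integral>\<^sup>+x. ennreal (\<bar>h x\<bar> powr t) \<partial>M) \<le> ennreal ((B * D powr (1 / p)) powr t)"
      using real by (intro nn_integral_powr_le_Youngs[OF assms(1-5) h exps rows cols B]) auto
    then show ?thesis
      using B real t Lp_norm_le_iff[of h M t "B * D powr (1 / p)"] Lp_norm_ereal_eq[of f N p D]
      by (simp add: ennreal_mult)
  qed
qed

lemma Lp_norm_infinity_integral_operator_le:
  fixes K :: "'a \<Rightarrow> 'b \<Rightarrow> real" and f :: "'b \<Rightarrow> real" and h :: "'a \<Rightarrow> real"
    and p q :: ereal and B :: real
  assumes K[measurable]: "(\<lambda>(x, y). K x y) \<in> borel_measurable (M \<Otimes>\<^sub>M N)"
    and K_nonneg: "\<And>x y. 0 \<le> K x y"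
    and [measurable]: "f \<in> borel_measurable N" "h \<in> borel_measurable M"
    and h: "\<And>x. x \<in> space M \<Longrightarrow> ennreal \<bar>h x\<bar> \<le> (\<integral>\<^sup>+y. ennreal (K x y * \<bar>f y\<bar>) \<partial>N)"
    and exps: "1 \<le> p" "1 \<le> q" "recip p + recip q = 1"
    and rows: "\<And>x. x \<in> space M \<Longrightarrow> Lp_norm q N (K x) \<le> ennreal B"
  shows "Lp_norm \<infinity> M h \<le> ennreal B * Lp_norm p N f"
proof (rule Lp_norm_infinity_le)
  fix x assume x: "x \<in> space M"
  have "ennreal \<bar>h x\<bar> \<le> (\<integral>\<^sup>+y. ennreal (\<bar>K x y\<bar> * \<bar>f y\<bar>) \<partial>N)"
    using h[OF x] K_nonneg by simp
  also have "\<dots> \<le> Lp_norm q N (K x) * Lp_norm p N f"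
    using exps measurable_Pair2[OF K x] by (intro Holder_inequality) auto
  also have "\<dots> \<le> ennreal B * Lp_norm p N f"
    using rows[OF x] by (rule mult_right_mono) simp
  finally show "ennreal \<bar>h x\<bar> \<le> ennreal B * Lp_norm p N f" .
qed measurable

lemma Youngs_inequality_integral_operator:
  fixes K :: "'a \<Rightarrow> 'b \<Rightarrow> real" and f :: "'b \<Rightarrow> real" and h :: "'a \<Rightarrow> real"
    and p q t :: ereal and B :: real
  assumes "sigma_finite_measure M" "sigma_finite_measure N"
    and K[measurable]: "(\<lambda>(x, y). K x y) \<in> borel_measurable (M \<Otimes>\<^sub>M N)"
    and K_nonneg: "\<And>x y. 0 \<le> K x y"
    and f[measurable]: "f \<in> borel_measurable N" and h_meas[measurable]: "h \<in> borel_measurable M"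
    and h: "\<And>x. x \<in> space M \<Longrightarrow> ennreal \<bar>h x\<bar> \<le> (\<integral>\<^sup>+y. ennreal (K x y * \<bar>f y\<bar>) \<partial>N)"
    and exps: "1 \<le> p" "p \<le> t" "1 \<le> q" "recip q = 1 + recip t - recip p"
    and rows: "\<And>x. x \<in> space M \<Longrightarrow> Lp_norm q N (K x) \<le> ennreal B"
    and cols: "\<And>y. y \<in> space N \<Longrightarrow> Lp_norm q M (\<lambda>x. K x y) \<le> ennreal B"
    and B: "0 < B"
  shows "Lp_norm t M h \<le> ennreal B * Lp_norm p N f"
proof -
  show ?thesis
  proof (cases "t = \<infinity>")
    case True
    then show ?thesis
      using Lp_norm_infinity_integral_operator_le[OF K K_nonneg f h_meas h exps(1,3) _ rows] exps(4)
      by simp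
  next
    case False
    have "1 \<le> t" using exps(1,2) by (rule order_trans)
    with False obtain t' where t': "t = ereal t'" "1 \<le> t'"
      by (cases t) auto
    obtain p' where p': "p = ereal p'" "1 \<le> p'" "p' \<le> t'"
      using t' exps(1,2) by (cases p) auto
    have "1 / p' \<le> 1" "0 < 1 / t'" using t' p' by auto
    then have "0 < 1 + 1 / t' - 1 / p'" by linarith
    then have "0 < recip q" using exps(4) t' p' by simp
    then obtain q' where q': "q = ereal q'" "0 < q'"
      using exps(3) by (cases q) auto
    have rows': "(\<integral>\<^sup>+y. ennreal (K x y powr q') \<partial>N) \<le> ennreal (B powr q')" if "x \<in> space M" for x
      using rows[OF that] that q' B K_nonneg by (simp add: Lp_norm_le_iff)
    have cols': "(\<integral>\<^sup>+x. ennreal (K x y powr q') \<partial>M) \<le> ennreal (B powr q')" if "y \<in> space N" for y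
      using cols[OF that] that q' B K_nonneg by (simp add: Lp_norm_le_iff)
    show ?thesis
      using Youngs_inequality_integral_operator_finite[OF assms(1-6) h _ _ _ _ rows' cols' B] t' p' q' exps
      by simp
  qed
qed

section \<open>Power tails\<close>

lemma ex_power2_interval:
  fixes r :: real
  assumes "1 \<le> r"
  obtains k :: nat where "2 ^ k \<le> r" "r < 2 ^ (k + 1)"
proof
  define k where "k = nat \<lfloor>log 2 r\<rfloor>"
  have k: "real k \<le> log 2 r" "log 2 r < real k + 1" using assms by (auto simp: k_def)
  have "(2::real) ^ k = 2 powr real k" by (simp add: powr_realpow)
  also have "\<dots> \<le> 2 powr log 2 r" using k by simp
  finally show "2 ^ k \<le> r" using assms by simp
  have "r = 2 powr log 2 r" using assms by simp
  also have "\<dots> < 2 powr (real k + 1)" using k by simp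
  finally show "r < 2 ^ (k + 1)" by (simp add: powr_realpow[symmetric] powr_add)
qed

lemma power_tail_le_dyadic_sum:
  fixes y :: "'a::euclidean_space" and b :: real
  assumes "0 \<le> b"
  shows "indicator {y. 1 \<le> norm y} y * ennreal (norm y powr - b)
    \<le> (\<Sum>k. ennreal (2 powr (- b * k)) * indicator (ball 0 (2 ^ (k + 1))) y)"
proof (cases "1 \<le> norm y")
  case True
  then obtain k :: nat where k: "2 ^ k \<le> norm y" "norm y < 2 ^ (k + 1)"
    by (rule ex_power2_interval)
  have "norm y powr - b \<le> (2 ^ k) powr - b"
    using k assms by (intro powr_mono2') auto
  also have "\<dots> = 2 powr (- b * k)"
    by (simp add: powr_realpow[symmetric] powr_powr mult.commute)
  finally have "ennreal (norm y powr - b)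
      \<le> ennreal (2 powr (- b * k)) * indicator (ball 0 (2 ^ (k + 1))) y"
    using k by (simp add: ennreal_leI)
  also have "\<dots> \<le> (\<Sum>k. ennreal (2 powr (- b * k)) * indicator (ball 0 (2 ^ (k + 1))) y)"
    using sum_le_suminf[OF summableI, of "{k}"] by simp
  finally show ?thesis using True by simp
qed simp

lemma nn_integral_power_tail_finite:
  fixes b :: real
  assumes b: "real DIM('a::euclidean_space) < b"
  shows "(\<integral>\<^sup>+y. indicator {y::'a. 1 \<le> norm y} y * ennreal (norm y powr - b) \<partial>lebesgue) < \<infinity>"
proof -
  let ?d = "DIM('a)" and ?V = "unit_ball_vol (real DIM('a))"
  define \<rho> where "\<rho> = (2::real) powr (real ?d - b)"
  have \<rho>: "0 < \<rho>" "\<rho> < 1"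
    using b powr_less_mono[of "real ?d - b" 0 2] by (auto simp: \<rho>_def)
  have b0: "0 \<le> b" using b by (metis of_nat_0_le_iff order.strict_trans1 less_imp_le)
  have "(\<integral>\<^sup>+y. indicator {y::'a. 1 \<le> norm y} y * ennreal (norm y powr - b) \<partial>lebesgue)
      \<le> (\<integral>\<^sup>+y. (\<Sum>k. ennreal (2 powr (- b * k)) * indicator (ball (0::'a) (2 ^ (k + 1))) y) \<partial>lebesgue)"
    by (intro nn_integral_mono power_tail_le_dyadic_sum b0)
  also have "\<dots> = (\<Sum>k. \<integral>\<^sup>+y. ennreal (2 powr (- b * k)) * indicator (ball (0::'a) (2 ^ (k + 1))) y \<partial>lebesgue)"
    by (intro nn_integral_suminf) measurable
  also have "\<dots> = (\<Sum>k. ennreal (2 powr (- b * k)) * emeasure lebesgue (ball (0::'a) (2 ^ (k + 1))))"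
    by (simp only: nn_integral_cmult_indicator[OF sets_lebesgue_ball])
  also have "\<dots> = (\<Sum>k. ennreal (2 ^ ?d * ?V * \<rho> ^ k))"
  proof (rule suminf_cong)
    fix k :: nat
    have "((2::real) ^ (k + 1)) ^ ?d = 2 powr (real ?d * (real k + 1))"
      by (simp add: powr_powr powr_add distrib_left mult.commute flip: powr_realpow)
    moreover have "\<rho> ^ k = 2 powr (real k * (real ?d - b))"
      by (simp add: \<rho>_def powr_power)
    moreover have "(2::real) ^ ?d = 2 powr real ?d"
      by (simp add: powr_realpow)
    ultimately have power: "2 powr (- b * k) * (?V * (2 ^ (k + 1)) ^ ?d) = 2 ^ ?d * ?V * \<rho> ^ k"
      by (simp add: powr_add[symmetric] algebra_simps)
    have "emeasure lebesgue (ball (0::'a) (2 ^ (k + 1))) = ennreal (?V * (2 ^ (k + 1)) ^ ?d)"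
      by (simp add: emeasure_ball)
    then have "ennreal (2 powr (- b * k)) * emeasure lebesgue (ball (0::'a) (2 ^ (k + 1)))
        = ennreal (2 powr (- b * k) * (?V * (2 ^ (k + 1)) ^ ?d))"
      by (simp add: ennreal_mult)
    then show "ennreal (2 powr (- b * k)) * emeasure lebesgue (ball (0::'a) (2 ^ (k + 1)))
        = ennreal (2 ^ ?d * ?V * \<rho> ^ k)"
      by (simp only: power)
  qed
  also have "\<dots> = ennreal (2 ^ ?d * ?V * (1 / (1 - \<rho>)))"
    using \<rho> by (intro suminf_ennreal_eq sums_mult[OF geometric_sums]) auto
  finally show ?thesis by (rule le_less_trans) simp
qed

lemma nn_integral_power_tail_scale:
  fixes b R :: real
  assumes R: "0 < R"
  shows "(\<integral>\<^sup>+y. indicator {y::'a::euclidean_space. R \<le> norm y} y * ennreal (norm y powr - b) \<partial>lebesgue)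
    = ennreal (R powr (real DIM('a) - b))
      * (\<integral>\<^sup>+y. indicator {y::'a. 1 \<le> norm y} y * ennreal (norm y powr - b) \<partial>lebesgue)"
proof -
  let ?T = "\<lambda>R y. indicator {y::'a. R \<le> norm y} y * ennreal (norm y powr - b)"
  have "(\<integral>\<^sup>+y. ?T R y \<partial>lebesgue) = ennreal (R ^ DIM('a)) * (\<integral>\<^sup>+y. ?T R (0 + R *\<^sub>R y) \<partial>lebesgue)"
    using nn_integral_lebesgue_affine[of "?T R" R 0] R by simp
  also have "(\<integral>\<^sup>+y. ?T R (0 + R *\<^sub>R y) \<partial>lebesgue) = (\<integral>\<^sup>+y. ennreal (R powr - b) * ?T 1 y \<partial>lebesgue)"
    using R by (intro nn_integral_cong) (simp add: indicator_def powr_mult ennreal_mult)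
  also have "\<dots> = ennreal (R powr - b) * (\<integral>\<^sup>+y. ?T 1 y \<partial>lebesgue)"
    by (rule nn_integral_cmult) measurable
  also have "ennreal (R ^ DIM('a)) * (ennreal (R powr - b) * (\<integral>\<^sup>+y. ?T 1 y \<partial>lebesgue))
      = ennreal (R powr (real DIM('a) - b)) * (\<integral>\<^sup>+y. ?T 1 y \<partial>lebesgue)"
    using R by (simp add: mult.assoc ennreal_mult powr_diff powr_minus divide_inverse flip: powr_realpow)
  finally show ?thesis .
qed

lemma nn_integral_power_tail_le:
  fixes b :: real
  assumes "real DIM('a::euclidean_space) < b"
  obtains J where "0 < J" "\<And>R. 0 < R \<Longrightarrow>
    (\<integral>\<^sup>+y. indicator {y::'a. R \<le> norm y} y * ennreal (norm y powr - b) \<partial>lebesgue)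
      \<le> ennreal (J * R powr (real DIM('a) - b))"
proof
  let ?J = "\<integral>\<^sup>+y. indicator {y::'a. 1 \<le> norm y} y * ennreal (norm y powr - b) \<partial>lebesgue"
  have J: "?J \<le> ennreal (enn2real ?J + 1)"
    using nn_integral_power_tail_finite[OF assms] by (cases ?J) auto
  show "0 < enn2real ?J + 1" by (simp add: add_nonneg_pos)
  fix R :: real
  assume "0 < R"
  then have "(\<integral>\<^sup>+y. indicator {y::'a. R \<le> norm y} y * ennreal (norm y powr - b) \<partial>lebesgue)
      = ennreal (R powr (real DIM('a) - b)) * ?J"
    by (rule nn_integral_power_tail_scale)
  also have "\<dots> \<le> ennreal (R powr (real DIM('a) - b)) * ennreal (enn2real ?J + 1)"
    by (rule mult_left_mono[OF J]) simp
  also have "\<dots> = ennreal ((enn2real ?J + 1) * R powr (real DIM('a) - b))"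
    by (subst ennreal_mult) (auto simp: mult.commute)
  finally show "(\<integral>\<^sup>+y. indicator {y::'a. R \<le> norm y} y * ennreal (norm y powr - b) \<partial>lebesgue)
      \<le> ennreal ((enn2real ?J + 1) * R powr (real DIM('a) - b))" .
qed

section \<open>The kernel of the extension operator\<close>

definition E_kernel :: "real \<Rightarrow> real \<Rightarrow> real \<Rightarrow> 'a::euclidean_space \<Rightarrow> real" where
  "E_kernel \<beta> \<gamma> xn z = xn powr \<beta> / (xn\<^sup>2 + (norm z)\<^sup>2) powr (\<gamma> / 2)"

lemma E_kernel_nonneg: "0 \<le> E_kernel \<beta> \<gamma> xn z"
  by (simp add: E_kernel_def)

lemma borel_measurable_E_kernel [measurable]: "E_kernel \<beta> \<gamma> xn \<in> borel_measurable borel"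
  unfolding E_kernel_def by measurable

lemma E_kernel_minus_commute: "E_kernel \<beta> \<gamma> xn (x - y) = E_kernel \<beta> \<gamma> xn (y - x)"
  by (simp add: E_kernel_def norm_minus_commute)

lemma abs_E_op_le_nn_integral:
  fixes f :: "'a::euclidean_space \<Rightarrow> real"
  shows "ennreal \<bar>E_op \<alpha> \<beta> f (x, xn)\<bar>
    \<le> (\<integral>\<^sup>+y. ennreal (E_kernel \<beta> (real DIM('a) + 1 - \<alpha>) xn (x - y) * \<bar>f y\<bar>) \<partial>lebesgue)"
proof -
  let ?g = "\<lambda>y. E_kernel \<beta> (real DIM('a) + 1 - \<alpha>) xn (x - y) * f y"
  have E: "E_op \<alpha> \<beta> f (x, xn) = (\<integral>y. ?g y \<partial>lebesgue)"
    by (simp add: E_op_def E_kernel_def)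
  show ?thesis
  proof (cases "integrable lebesgue ?g")
    case True
    then show ?thesis
      using integral_norm_bound_ennreal[OF True] by (simp add: E abs_mult E_kernel_nonneg)
  qed (simp add: E not_integrable_integral_eq)
qed

lemma borel_measurable_E_op_slice [measurable]:
  fixes f :: "'a::euclidean_space \<Rightarrow> real"
  assumes [measurable]: "f \<in> borel_measurable lebesgue"
  shows "(\<lambda>x. E_op \<alpha> \<beta> f (x, xn)) \<in> borel_measurable lebesgue"
  unfolding E_op_def prod.case
  by (rule sigma_finite_measure.borel_measurable_lebesgue_integral[OF sigma_finite_lebesgue])
    measurable

lemma borel_measurable_E_op [measurable]:
  fixes f :: "'a::euclidean_space \<Rightarrow> real"
  assumes [measurable]: "f \<in> borel_measurable lebesgue"
  shows "E_op \<alpha> \<beta> f \<in> borel_measurable lebesgue"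
proof -
  have "E_op \<alpha> \<beta> f = (\<lambda>p. \<integral>y. snd p powr \<beta> * f y
      / ((snd p)\<^sup>2 + (norm (fst p - y))\<^sup>2) powr ((real DIM('a) + 1 - \<alpha>) / 2) \<partial>lebesgue)"
    by (auto simp: E_op_def fun_eq_iff)
  also have "\<dots> \<in> borel_measurable lebesgue"
    by (rule sigma_finite_measure.borel_measurable_lebesgue_integral[OF sigma_finite_lebesgue])
      measurable
  finally show ?thesis .
qed

lemma E_kernel_le:
  assumes "0 < xn" "0 \<le> \<gamma>" "0 \<le> r" "r \<le> norm z"
  shows "E_kernel \<beta> \<gamma> xn z \<le> xn powr \<beta> / (r\<^sup>2 + xn\<^sup>2) powr (\<gamma> / 2)"
proof -
  have "r\<^sup>2 \<le> (norm z)\<^sup>2" using assms by (intro power_mono) auto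
  then have "(r\<^sup>2 + xn\<^sup>2) powr (\<gamma> / 2) \<le> (xn\<^sup>2 + (norm z)\<^sup>2) powr (\<gamma> / 2)"
    using assms by (intro powr_mono2) auto
  moreover have "0 < (r\<^sup>2 + xn\<^sup>2) powr (\<gamma> / 2)" "0 < (xn\<^sup>2 + (norm z)\<^sup>2) powr (\<gamma> / 2)"
    using assms by (simp_all add: add_nonneg_pos add_pos_nonneg)
  ultimately show ?thesis
    unfolding E_kernel_def by (intro divide_left_mono mult_pos_pos) auto
qed

lemma E_kernel_le_near:
  assumes "0 < xn" "0 \<le> \<gamma>"
  shows "E_kernel \<beta> \<gamma> xn z \<le> xn powr (\<beta> - \<gamma>)"
proof -
  have "(xn\<^sup>2) powr (\<gamma> / 2) = xn powr \<gamma>"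
    using assms by (simp add: powr_powr flip: powr_numeral)
  then show ?thesis
    using E_kernel_le[OF assms, of 0 z \<beta>] by (simp add: powr_diff)
qed

lemma E_kernel_le_far:
  assumes "0 < xn" "0 \<le> \<gamma>" "z \<noteq> 0"
  shows "E_kernel \<beta> \<gamma> xn z \<le> xn powr \<beta> * norm z powr - \<gamma>"
proof -
  have "norm z powr \<gamma> = ((norm z)\<^sup>2) powr (\<gamma> / 2)"
    using assms by (simp add: powr_powr flip: powr_numeral)
  also have "\<dots> \<le> (xn\<^sup>2 + (norm z)\<^sup>2) powr (\<gamma> / 2)"
    using assms by (intro powr_mono2) auto
  finally have "xn powr \<beta> / (xn\<^sup>2 + (norm z)\<^sup>2) powr (\<gamma> / 2) \<le> xn powr \<beta> / norm z powr \<gamma>"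
    using assms by (intro divide_left_mono) auto
  then show ?thesis by (simp add: E_kernel_def powr_minus_divide)
qed

lemma E_kernel_powr_le:
  assumes xn: "0 < xn" and "0 \<le> \<gamma>" "0 < Q"
  shows "ennreal (E_kernel \<beta> \<gamma> xn z powr Q)
    \<le> ennreal (xn powr (Q * (\<beta> - \<gamma>))) * indicator (ball 0 xn) z
      + ennreal (xn powr (Q * \<beta>)) * (indicator {z. xn \<le> norm z} z * ennreal (norm z powr - (\<gamma> * Q)))"
proof (cases "norm z < xn")
  case True
  have "E_kernel \<beta> \<gamma> xn z powr Q \<le> (xn powr (\<beta> - \<gamma>)) powr Q"
    using assms E_kernel_le_near[OF xn] by (intro powr_mono2) (auto simp: E_kernel_nonneg)
  then show ?thesis
    using True by (simp add: powr_powr mult.commute ennreal_leI)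
next
  case False
  then have "z \<noteq> 0" using xn by auto
  then have "E_kernel \<beta> \<gamma> xn z powr Q \<le> (xn powr \<beta> * norm z powr - \<gamma>) powr Q"
    using assms E_kernel_le_far[OF xn] by (intro powr_mono2) (auto simp: E_kernel_nonneg)
  then show ?thesis
    using False by (simp add: powr_mult powr_powr mult.commute ennreal_mult[symmetric] ennreal_leI)
qed

lemma nn_integral_E_kernel_powr_le:
  assumes Q: "0 < Q" and \<gamma>Q: "real DIM('a::euclidean_space) < \<gamma> * Q"
  obtains C where "0 < C" "\<And>xn. 0 < xn \<Longrightarrow>
    (\<integral>\<^sup>+z. ennreal (E_kernel \<beta> \<gamma> xn (z::'a) powr Q) \<partial>lebesgue)
      \<le> ennreal (C * xn powr (real DIM('a) + Q * (\<beta> - \<gamma>)))"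
proof -
  let ?d = "real DIM('a)" and ?V = "unit_ball_vol (real DIM('a))"
  have \<gamma>: "0 \<le> \<gamma>" using Q \<gamma>Q by (smt (verit) of_nat_0_le_iff mult_nonpos_nonneg)
  obtain J where J: "0 < J" "\<And>R. 0 < R \<Longrightarrow>
      (\<integral>\<^sup>+z. indicator {z::'a. R \<le> norm z} z * ennreal (norm z powr - (\<gamma> * Q)) \<partial>lebesgue)
        \<le> ennreal (J * R powr (?d - \<gamma> * Q))"
    using nn_integral_power_tail_le[OF \<gamma>Q] by blast
  show ?thesis
  proof (rule that[of "?V + J"])
    show "0 < ?V + J" using J by (simp add: add_nonneg_pos)
    fix xn :: real
    assume xn: "0 < xn"
    let ?A = "xn powr (Q * (\<beta> - \<gamma>))" and ?B = "xn powr (Q * \<beta>)"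
    let ?T = "\<lambda>z. indicator {z::'a. xn \<le> norm z} z * ennreal (norm z powr - (\<gamma> * Q))"
    have "(\<integral>\<^sup>+z. ennreal (E_kernel \<beta> \<gamma> xn (z::'a) powr Q) \<partial>lebesgue)
        \<le> (\<integral>\<^sup>+z. ennreal ?A * indicator (ball 0 xn) z + ennreal ?B * ?T z \<partial>lebesgue)"
      using E_kernel_powr_le[OF xn \<gamma> Q] by (intro nn_integral_mono) blast
    also have "\<dots> = ennreal ?A * emeasure lebesgue (ball (0::'a) xn) + ennreal ?B * (\<integral>\<^sup>+z. ?T z \<partial>lebesgue)"
      by (simp add: nn_integral_add nn_integral_cmult nn_integral_cmult_indicator[OF sets_lebesgue_ball])
    also have "\<dots> \<le> ennreal ?A * ennreal (?V * xn ^ DIM('a)) + ennreal ?B * ennreal (J * xn powr (?d - \<gamma> * Q))"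
      using xn J(2)[OF xn] by (intro add_mono mult_left_mono) (simp_all add: emeasure_ball)
    also have "\<dots> = ennreal (?A * (?V * xn powr ?d) + ?B * (J * xn powr (?d - \<gamma> * Q)))"
      using xn J by (simp add: ennreal_plus ennreal_mult powr_realpow)
    also have "?A * (?V * xn powr ?d) + ?B * (J * xn powr (?d - \<gamma> * Q))
        = (?V + J) * xn powr (?d + Q * (\<beta> - \<gamma>))"
      by (simp add: powr_add[symmetric] algebra_simps)
    finally show "(\<integral>\<^sup>+z. ennreal (E_kernel \<beta> \<gamma> xn (z::'a) powr Q) \<partial>lebesgue)
        \<le> ennreal ((?V + J) * xn powr (?d + Q * (\<beta> - \<gamma>)))" .
  qed
qed

lemma Lp_norm_E_kernel_le:
  fixes q :: ereal
  assumes q: "1 \<le> q" and \<gamma>: "0 \<le> \<gamma>" and q\<gamma>: "real DIM('a::euclidean_space) * recip q < \<gamma>"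
  obtains C where "0 < C" "\<And>xn (x::'a). 0 < xn \<Longrightarrow>
    Lp_norm q lebesgue (\<lambda>y. E_kernel \<beta> \<gamma> xn (x - y))
      \<le> ennreal (C * xn powr (real DIM('a) * recip q + \<beta> - \<gamma>))"
proof (cases "q = \<infinity>")
  case True
  show ?thesis
  proof (rule that[of 1])
    fix xn :: real and x :: 'a
    assume "0 < xn"
    moreover have "(\<lambda>y. E_kernel \<beta> \<gamma> xn (x - y)) \<in> borel_measurable lebesgue" by measurable
    ultimately show "Lp_norm q lebesgue (\<lambda>y. E_kernel \<beta> \<gamma> xn (x - y))
        \<le> ennreal (1 * xn powr (real DIM('a) * recip q + \<beta> - \<gamma>))"
      using \<gamma> unfolding True
      by (intro Lp_norm_infinity_le) (auto simp: E_kernel_nonneg E_kernel_le_near)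
  qed simp
next
  case False
  with q obtain Q where Q: "q = ereal Q" "1 \<le> Q" by (cases q) auto
  then have "real DIM('a) < \<gamma> * Q" using q\<gamma> by (simp add: field_simps)
  then obtain C where C: "0 < C" "\<And>xn. 0 < xn \<Longrightarrow>
      (\<integral>\<^sup>+z. ennreal (E_kernel \<beta> \<gamma> xn (z::'a) powr Q) \<partial>lebesgue)
        \<le> ennreal (C * xn powr (real DIM('a) + Q * (\<beta> - \<gamma>)))"
    using nn_integral_E_kernel_powr_le[of Q \<gamma> \<beta>] Q by auto
  show ?thesis
  proof (rule that[of "C powr (1 / Q)"])
    show "0 < C powr (1 / Q)" using C by simp
    fix xn :: real and x :: 'a
    assume xn: "0 < xn"
    have "(\<lambda>z. ennreal (E_kernel \<beta> \<gamma> xn (z::'a) powr Q)) \<in> borel_measurable lebesgue"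
      by measurable
    from nn_integral_lebesgue_reflect[OF this, of x]
    have "(\<integral>\<^sup>+y. ennreal (\<bar>E_kernel \<beta> \<gamma> xn (x - y)\<bar> powr Q) \<partial>lebesgue)
        = (\<integral>\<^sup>+z. ennreal (E_kernel \<beta> \<gamma> xn (z::'a) powr Q) \<partial>lebesgue)"
      by (simp add: E_kernel_nonneg)
    also have "\<dots> \<le> ennreal (C * xn powr (real DIM('a) + Q * (\<beta> - \<gamma>)))"
      by (rule C(2)[OF xn])
    also have "real DIM('a) + Q * (\<beta> - \<gamma>) = (real DIM('a) * (1 / Q) + \<beta> - \<gamma>) * Q"
      using Q by (simp add: field_simps)
    finally show "Lp_norm q lebesgue (\<lambda>y. E_kernel \<beta> \<gamma> xn (x - y))
        \<le> ennreal (C powr (1 / Q) * xn powr (real DIM('a) * recip q + \<beta> - \<gamma>))"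
      using Q C by (simp add: Lp_norm_le_of_nn_integral_powr_le powr_powr[symmetric])
  qed
qed

lemma E_kernel_far_le:
  fixes x y :: "'a::euclidean_space"
  assumes xn: "0 < xn" and \<gamma>: "0 \<le> \<gamma>" and x: "norm x < R / 2" and y: "R \<le> norm y"
  shows "E_kernel \<beta> \<gamma> xn (x - y) \<le> 2 powr \<gamma> * xn powr \<beta> * norm y powr - \<gamma>"
proof -
  have "0 < R" using x norm_ge_zero[of x] by linarith
  then have half: "0 < norm y / 2" "norm y / 2 \<le> norm (x - y)"
    using x y norm_triangle_ineq2[of y x] norm_minus_commute[of x y] by auto
  have "E_kernel \<beta> \<gamma> xn (x - y) \<le> xn powr \<beta> * norm (x - y) powr - \<gamma>"
    using half by (intro E_kernel_le_far[OF xn \<gamma>]) auto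
  also have "\<dots> \<le> xn powr \<beta> * (norm y / 2) powr - \<gamma>"
    using half \<gamma> by (intro mult_left_mono powr_mono2') auto
  also have "\<dots> = 2 powr \<gamma> * xn powr \<beta> * norm y powr - \<gamma>"
    by (subst powr_divide) (auto simp: powr_minus_divide)
  finally show ?thesis .
qed

lemma E_kernel_far_indicator_le:
  fixes x y :: "'a::euclidean_space"
  assumes "0 < xn" "0 \<le> \<gamma>" "norm x < R / 2"
  shows "E_kernel \<beta> \<gamma> xn (x - y) * indicator {y. R \<le> norm y} y \<le> 2 powr \<gamma> * xn powr \<beta> * R powr - \<gamma>"
proof (cases "R \<le> norm y")
  case True
  have "0 < R" using assms(3) norm_ge_zero[of x] by linarith
  then have "norm y powr - \<gamma> \<le> R powr - \<gamma>"
    using True assms(2) by (intro powr_mono2') auto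
  then show ?thesis
    using E_kernel_far_le[OF assms True, of \<beta>] True by (simp add: mult_left_mono order.trans)
qed simp

lemma E_kernel_far_powr_le:
  fixes x y :: "'a::euclidean_space"
  assumes "0 < xn" "0 \<le> \<gamma>" "norm x < R / 2" "0 < Q"
  shows "ennreal ((E_kernel \<beta> \<gamma> xn (x - y) * indicator {y. R \<le> norm y} y) powr Q)
    \<le> ennreal ((2 powr \<gamma> * xn powr \<beta>) powr Q) * (indicator {y. R \<le> norm y} y * ennreal (norm y powr - (\<gamma> * Q)))"
proof (cases "R \<le> norm y")
  case True
  then have "(E_kernel \<beta> \<gamma> xn (x - y) * indicator {y. R \<le> norm y} y) powr Q
      \<le> (2 powr \<gamma> * xn powr \<beta> * norm y powr - \<gamma>) powr Q"
    using E_kernel_far_le[OF assms(1-3) True] assms(4) by (intro powr_mono2) (auto simp: E_kernel_nonneg)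
  also have "\<dots> = (2 powr \<gamma> * xn powr \<beta>) powr Q * norm y powr - (\<gamma> * Q)"
    by (simp add: powr_mult powr_powr)
  finally have "ennreal ((E_kernel \<beta> \<gamma> xn (x - y) * indicator {y. R \<le> norm y} y) powr Q)
      \<le> ennreal ((2 powr \<gamma> * xn powr \<beta>) powr Q * norm y powr - (\<gamma> * Q))"
    by (rule ennreal_leI)
  then show ?thesis using True by (simp add: ennreal_mult)
qed simp

lemma nn_integral_E_kernel_far_powr_le:
  assumes Q: "0 < Q" and \<gamma>: "0 \<le> \<gamma>" and \<gamma>Q: "real DIM('a::euclidean_space) < \<gamma> * Q"
  obtains J where "0 < J" "\<And>R xn (x::'a). 0 < xn \<Longrightarrow> norm x < R / 2 \<Longrightarrow>
    (\<integral>\<^sup>+y. ennreal ((E_kernel \<beta> \<gamma> xn (x - y) * indicator {y. R \<le> norm y} y) powr Q) \<partial>lebesgue)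
      \<le> ennreal (J * (2 powr \<gamma> * xn powr \<beta> * R powr (real DIM('a) / Q - \<gamma>)) powr Q)"
proof -
  let ?T = "\<lambda>R y. indicator {y::'a. R \<le> norm y} y * ennreal (norm y powr - (\<gamma> * Q))"
  obtain J where J: "0 < J" "\<And>R. 0 < R \<Longrightarrow> (\<integral>\<^sup>+y. ?T R y \<partial>lebesgue) \<le> ennreal (J * R powr (real DIM('a) - \<gamma> * Q))"
    using nn_integral_power_tail_le[OF \<gamma>Q] by blast
  show ?thesis
  proof (rule that[OF J(1)])
    fix R xn :: real and x :: 'a
    assume xn: "0 < xn" and x: "norm x < R / 2"
    have R: "0 < R" using x norm_ge_zero[of x] by linarith
    let ?c = "(2 powr \<gamma> * xn powr \<beta>) powr Q"
    have "(\<integral>\<^sup>+y. ennreal ((E_kernel \<beta> \<gamma> xn (x - y) * indicator {y. R \<le> norm y} y) powr Q) \<partial>lebesgue)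
        \<le> (\<integral>\<^sup>+y. ennreal ?c * ?T R y \<partial>lebesgue)"
      using E_kernel_far_powr_le[OF xn \<gamma> x Q] by (rule nn_integral_mono)
    also have "\<dots> = ennreal ?c * (\<integral>\<^sup>+y. ?T R y \<partial>lebesgue)"
      by (rule nn_integral_cmult) measurable
    also have "\<dots> \<le> ennreal ?c * ennreal (J * R powr (real DIM('a) - \<gamma> * Q))"
      by (rule mult_left_mono[OF J(2)[OF R]]) simp
    also have "(real DIM('a) - \<gamma> * Q) = (real DIM('a) / Q - \<gamma>) * Q"
      using Q by (simp add: field_simps)
    finally show "(\<integral>\<^sup>+y. ennreal ((E_kernel \<beta> \<gamma> xn (x - y) * indicator {y. R \<le> norm y} y) powr Q) \<partial>lebesgue)
        \<le> ennreal (J * (2 powr \<gamma> * xn powr \<beta> * R powr (real DIM('a) / Q - \<gamma>)) powr Q)"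
      using J R by (simp add: ennreal_mult[symmetric] powr_mult powr_powr mult_ac)
  qed
qed

lemma Lp_norm_E_kernel_far_le:
  fixes q :: ereal
  assumes q: "1 \<le> q" and \<gamma>: "0 \<le> \<gamma>" and q\<gamma>: "real DIM('a::euclidean_space) * recip q < \<gamma>"
  obtains C where "0 < C" "\<And>R xn (x::'a). 0 < xn \<Longrightarrow> norm x < R / 2 \<Longrightarrow>
    Lp_norm q lebesgue (\<lambda>y. E_kernel \<beta> \<gamma> xn (x - y) * indicator {y. R \<le> norm y} y)
      \<le> ennreal (C * xn powr \<beta> * R powr (real DIM('a) * recip q - \<gamma>))"
proof -
  let ?K = "\<lambda>R xn x y. E_kernel \<beta> \<gamma> xn (x - y) * indicator {y::'a. R \<le> norm y} y"
  have K_meas: "?K R xn x \<in> borel_measurable lebesgue" for R xn x by measurable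
  show ?thesis
  proof (cases "q = \<infinity>")
    case True
    show ?thesis
    proof (rule that[of "2 powr \<gamma>"])
      fix R xn :: real and x :: 'a
      assume "0 < xn" "norm x < R / 2"
      then show "Lp_norm q lebesgue (?K R xn x)
          \<le> ennreal (2 powr \<gamma> * xn powr \<beta> * R powr (real DIM('a) * recip q - \<gamma>))"
        unfolding True using K_meas \<gamma> E_kernel_far_indicator_le
        by (intro Lp_norm_infinity_le) (auto simp: E_kernel_nonneg intro: ennreal_leI)
    qed simp
  next
    case False
    with q obtain Q where Q: "q = ereal Q" "1 \<le> Q" by (cases q) auto
    then have "real DIM('a) < \<gamma> * Q" using q\<gamma> by (simp add: field_simps)
    then obtain J where J: "0 < J" "\<And>R xn (x::'a). 0 < xn \<Longrightarrow> norm x < R / 2 \<Longrightarrow>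
        (\<integral>\<^sup>+y. ennreal (?K R xn x y powr Q) \<partial>lebesgue)
          \<le> ennreal (J * (2 powr \<gamma> * xn powr \<beta> * R powr (real DIM('a) / Q - \<gamma>)) powr Q)"
      using nn_integral_E_kernel_far_powr_le[of Q \<gamma> \<beta>] Q \<gamma> by auto
    show ?thesis
    proof (rule that[of "J powr (1 / Q) * 2 powr \<gamma>"])
      show "0 < J powr (1 / Q) * 2 powr \<gamma>" using J by simp
      fix R xn :: real and x :: 'a
      assume "0 < xn" "norm x < R / 2"
      then have "Lp_norm (ereal Q) lebesgue (?K R xn x)
          \<le> ennreal (J powr (1 / Q) * (2 powr \<gamma> * xn powr \<beta> * R powr (real DIM('a) / Q - \<gamma>)))"
        using J Q by (intro Lp_norm_le_of_nn_integral_powr_le[OF K_meas]) (auto simp: E_kernel_nonneg)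
      then show "Lp_norm q lebesgue (?K R xn x)
          \<le> ennreal (J powr (1 / Q) * 2 powr \<gamma> * xn powr \<beta> * R powr (real DIM('a) * recip q - \<gamma>))"
        using Q by (simp add: mult_ac)
    qed
  qed
qed

lemma E_op_slice_Lp_norm_le:
  fixes s t :: ereal
  assumes s: "1 \<le> s" "s \<le> t" and \<gamma>: "0 < real DIM('a::euclidean_space) + 1 - \<alpha>"
    and st: "1 + recip t < (real DIM('a) + 1 - \<alpha>) / real DIM('a) + recip s"
  shows "\<exists>C>0. \<forall>(f :: 'a \<Rightarrow> real) xn.
    f \<in> borel_measurable lebesgue \<and> Lp_norm s lebesgue f < \<infinity> \<and> xn > 0 \<longrightarrow>
    Lp_norm t lebesgue (\<lambda>x'. E_op \<alpha> \<beta> f (x', xn))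
      \<le> ennreal (C * xn powr (real DIM('a) * (1 + recip t - recip s) - (real DIM('a) + 1 - \<alpha> - \<beta>)))
        * Lp_norm s lebesgue f"
proof -
  let ?d = "real DIM('a)" and ?\<gamma> = "real DIM('a) + 1 - \<alpha>"
  have "0 \<le> 1 + recip t - recip s" "1 + recip t - recip s \<le> 1"
    using recip_ge_one_bounds[OF s(1)] recip_ge_one_bounds[OF order.trans[OF s]]
      recip_antimono[OF s] by auto
  then obtain q where q: "1 \<le> q" "recip q = 1 + recip t - recip s"
    by (rule ex_recip_eq)
  have "1 + recip t - recip s < ?\<gamma> / ?d" using st by simp
  then have "?d * recip q < ?\<gamma>"
    using q by (simp add: pos_less_divide_eq mult.commute)
  then obtain C where C: "0 < C" "\<And>xn (x::'a). 0 < xn \<Longrightarrow>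
      Lp_norm q lebesgue (\<lambda>y. E_kernel \<beta> ?\<gamma> xn (x - y)) \<le> ennreal (C * xn powr (?d * recip q + \<beta> - ?\<gamma>))"
    using Lp_norm_E_kernel_le[OF q(1) less_imp_le[OF \<gamma>]] by blast
  show ?thesis
  proof (intro exI[of _ C] conjI allI impI)
    fix f :: "'a \<Rightarrow> real" and xn :: real
    assume "f \<in> borel_measurable lebesgue \<and> Lp_norm s lebesgue f < \<infinity> \<and> xn > 0"
    then have f[measurable]: "f \<in> borel_measurable lebesgue" and xn: "0 < xn" by auto
    have "Lp_norm t lebesgue (\<lambda>x'. E_op \<alpha> \<beta> f (x', xn))
        \<le> ennreal (C * xn powr (?d * recip q + \<beta> - ?\<gamma>)) * Lp_norm s lebesgue f"
    proof (rule Youngs_inequality_integral_operator[where K = "\<lambda>x y. E_kernel \<beta> ?\<gamma> xn (x - y)"])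
      show "(\<lambda>(x, y). E_kernel \<beta> ?\<gamma> xn (x - y)) \<in> borel_measurable (lebesgue \<Otimes>\<^sub>M lebesgue)"
        by measurable
      show "Lp_norm q lebesgue (\<lambda>x. E_kernel \<beta> ?\<gamma> xn (x - y))
          \<le> ennreal (C * xn powr (?d * recip q + \<beta> - ?\<gamma>))" for y :: 'a
        using C(2)[OF xn, of y] by (simp add: E_kernel_minus_commute)
    qed (use s q C xn in \<open>auto simp: sigma_finite_lebesgue E_kernel_nonneg abs_E_op_le_nn_integral\<close>)
    also have "?d * recip q + \<beta> - ?\<gamma> = ?d * (1 + recip t - recip s) - (?d + 1 - \<alpha> - \<beta>)"
      using q by simp
    finally show "Lp_norm t lebesgue (\<lambda>x'. E_op \<alpha> \<beta> f (x', xn))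
        \<le> ennreal (C * xn powr (?d * (1 + recip t - recip s) - (?d + 1 - \<alpha> - \<beta>)))
          * Lp_norm s lebesgue f" .
  qed (rule C(1))
qed

lemma abs_E_op_le_compact_support:
  assumes \<gamma>: "0 < real DIM('a::euclidean_space) + 1 - \<alpha>"
  shows "\<exists>C>0. \<forall>(f :: 'a \<Rightarrow> real) R x' xn.
    integrable lebesgue f \<and> R > 0 \<and> (\<forall>y. norm y \<ge> R \<longrightarrow> f y = 0) \<and> xn > 0 \<longrightarrow>
    \<bar>E_op \<alpha> \<beta> f (x', xn)\<bar>
      \<le> C * xn powr \<beta> / ((max (norm x' - R) 0)\<^sup>2 + xn\<^sup>2) powr ((real DIM('a) + 1 - \<alpha>) / 2)
        * (\<integral>y. \<bar>f y\<bar> \<partial>lebesgue)"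
proof (intro exI[of _ 1] conjI allI impI)
  fix f :: "'a \<Rightarrow> real" and R xn :: real and x' :: 'a
  assume "integrable lebesgue f \<and> R > 0 \<and> (\<forall>y. norm y \<ge> R \<longrightarrow> f y = 0) \<and> xn > 0"
  then have f: "integrable lebesgue f" and supp: "\<And>y. R \<le> norm y \<Longrightarrow> f y = 0" and xn: "0 < xn"
    by auto
  let ?\<gamma> = "real DIM('a) + 1 - \<alpha>"
  let ?M = "xn powr \<beta> / ((max (norm x' - R) 0)\<^sup>2 + xn\<^sup>2) powr (?\<gamma> / 2)"
  have "ennreal \<bar>E_op \<alpha> \<beta> f (x', xn)\<bar> \<le> (\<integral>\<^sup>+y. ennreal (E_kernel \<beta> ?\<gamma> xn (x' - y) * \<bar>f y\<bar>) \<partial>lebesgue)"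
    by (rule abs_E_op_le_nn_integral)
  also have "\<dots> \<le> (\<integral>\<^sup>+y. ennreal (?M * \<bar>f y\<bar>) \<partial>lebesgue)"
  proof (intro nn_integral_mono ennreal_leI)
    fix y
    show "E_kernel \<beta> ?\<gamma> xn (x' - y) * \<bar>f y\<bar> \<le> ?M * \<bar>f y\<bar>"
    proof (cases "norm y < R")
      case True
      then have "max (norm x' - R) 0 \<le> norm (x' - y)"
        using norm_triangle_ineq2[of x' y] by auto
      then show ?thesis
        using xn \<gamma> by (intro mult_right_mono E_kernel_le) auto
    qed (simp add: supp)
  qed
  also have "\<dots> = ennreal (?M * (\<integral>y. \<bar>f y\<bar> \<partial>lebesgue))"
    using f by (simp add: nn_integral_cmult ennreal_mult nn_integral_eq_integral)
  finally show "\<bar>E_op \<alpha> \<beta> f (x', xn)\<bar> \<le> 1 * xn powr \<beta>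
      / ((max (norm x' - R) 0)\<^sup>2 + xn\<^sup>2) powr (?\<gamma> / 2) * (\<integral>y. \<bar>f y\<bar> \<partial>lebesgue)"
    by (simp add: ennreal_le_iff)
qed simp

lemma abs_E_op_le_outside_support:
  fixes s :: ereal
  assumes s: "1 \<le> s" and \<gamma>: "0 < real DIM('a::euclidean_space) + 1 - \<alpha>"
    and hs: "(\<alpha> - 1) / real DIM('a) < recip s"
  obtains C where "0 < C" "\<And>(f :: 'a \<Rightarrow> real) R xn x'. f \<in> borel_measurable lebesgue \<Longrightarrow>
    (\<forall>y. norm y < R \<longrightarrow> f y = 0) \<Longrightarrow> 0 < xn \<Longrightarrow> norm x' < R / 2 \<Longrightarrow>
    ennreal \<bar>E_op \<alpha> \<beta> f (x', xn)\<bar>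
      \<le> ennreal (C * xn powr \<beta> * R powr ((\<alpha> - 1) - real DIM('a) * recip s)) * Lp_norm s lebesgue f"
proof -
  let ?d = "real DIM('a)" and ?\<gamma> = "real DIM('a) + 1 - \<alpha>"
  have "0 \<le> 1 - recip s" "1 - recip s \<le> 1" using recip_ge_one_bounds[OF s] by auto
  then obtain q where q: "1 \<le> q" "recip q = 1 - recip s"
    by (rule ex_recip_eq)
  have "\<alpha> - 1 < ?d * recip s" using hs by (simp add: pos_divide_less_eq mult.commute)
  then have "?d * recip q < ?\<gamma>" using q by (simp add: right_diff_distrib)
  then obtain C where C: "0 < C" "\<And>R xn (x::'a). 0 < xn \<Longrightarrow> norm x < R / 2 \<Longrightarrow>
      Lp_norm q lebesgue (\<lambda>y. E_kernel \<beta> ?\<gamma> xn (x - y) * indicator {y. R \<le> norm y} y)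
        \<le> ennreal (C * xn powr \<beta> * R powr (?d * recip q - ?\<gamma>))"
    using Lp_norm_E_kernel_far_le[OF q(1) less_imp_le[OF \<gamma>]] by blast
  show ?thesis
  proof (rule that[OF C(1)])
    fix f :: "'a \<Rightarrow> real" and R xn :: real and x' :: 'a
    assume f[measurable]: "f \<in> borel_measurable lebesgue"
      and supp: "\<forall>y. norm y < R \<longrightarrow> f y = 0" and xn: "0 < xn" and x': "norm x' < R / 2"
    let ?K = "\<lambda>y. E_kernel \<beta> ?\<gamma> xn (x' - y) * indicator {y. R \<le> norm y} y"
    have "ennreal \<bar>E_op \<alpha> \<beta> f (x', xn)\<bar> \<le> (\<integral>\<^sup>+y. ennreal (E_kernel \<beta> ?\<gamma> xn (x' - y) * \<bar>f y\<bar>) \<partial>lebesgue)"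
      by (rule abs_E_op_le_nn_integral)
    also have "\<dots> = (\<integral>\<^sup>+y. ennreal (\<bar>?K y\<bar> * \<bar>f y\<bar>) \<partial>lebesgue)"
      using supp by (intro nn_integral_cong) (auto simp: indicator_def E_kernel_nonneg)
    also have "\<dots> \<le> Lp_norm q lebesgue ?K * Lp_norm s lebesgue f"
      using s q by (intro Holder_inequality) auto
    also have "\<dots> \<le> ennreal (C * xn powr \<beta> * R powr (?d * recip q - ?\<gamma>)) * Lp_norm s lebesgue f"
      using C(2)[OF xn x'] by (rule mult_right_mono) simp
    also have "?d * recip q - ?\<gamma> = (\<alpha> - 1) - ?d * recip s"
      using q by (simp add: right_diff_distrib)
    finally show "ennreal \<bar>E_op \<alpha> \<beta> f (x', xn)\<bar>
        \<le> ennreal (C * xn powr \<beta> * R powr ((\<alpha> - 1) - ?d * recip s)) * Lp_norm s lebesgue f" .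
  qed
qed

lemma E_op_ball_Linf_le:
  fixes s :: ereal
  assumes s: "1 \<le> s" and \<gamma>: "0 < real DIM('a::euclidean_space) + 1 - \<alpha>"
    and hs: "(\<alpha> - 1) / real DIM('a) < recip s"
  shows "\<exists>C>0. \<forall>(f :: 'a \<Rightarrow> real) R xn.
    f \<in> borel_measurable lebesgue \<and> Lp_norm s lebesgue f < \<infinity> \<and> R > 0
    \<and> (\<forall>y. norm y < R \<longrightarrow> f y = 0) \<and> xn > 0 \<longrightarrow>
    Lp_norm \<infinity> (restrict_space lebesgue (ball 0 (R / 2))) (\<lambda>x'. E_op \<alpha> \<beta> f (x', xn))
      \<le> ennreal (C * xn powr \<beta> * R powr ((\<alpha> - 1) - real DIM('a) * recip s)) * Lp_norm s lebesgue f"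
proof -
  obtain C where C: "0 < C" "\<And>(f :: 'a \<Rightarrow> real) R xn x'. f \<in> borel_measurable lebesgue \<Longrightarrow>
      (\<forall>y. norm y < R \<longrightarrow> f y = 0) \<Longrightarrow> 0 < xn \<Longrightarrow> norm x' < R / 2 \<Longrightarrow>
      ennreal \<bar>E_op \<alpha> \<beta> f (x', xn)\<bar>
        \<le> ennreal (C * xn powr \<beta> * R powr ((\<alpha> - 1) - real DIM('a) * recip s)) * Lp_norm s lebesgue f"
    using abs_E_op_le_outside_support[OF s \<gamma> hs] by blast
  show ?thesis
    using C by (intro exI[of _ C] conjI allI impI Lp_norm_infinity_le measurable_restrict_space1)
      auto
qed

lemma E_op_half_ball_Linf_le:
  fixes s :: ereal
  assumes s: "1 \<le> s" and \<gamma>: "0 < real DIM('a::euclidean_space) + 1 - \<alpha>" and \<beta>: "0 \<le> \<beta>"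
    and hs: "(\<alpha> - 1) / real DIM('a) < recip s"
  shows "\<exists>C>0. \<forall>(f :: 'a \<Rightarrow> real) R.
    f \<in> borel_measurable lebesgue \<and> Lp_norm s lebesgue f < \<infinity> \<and> R > 0
    \<and> (\<forall>y. norm y < R \<longrightarrow> f y = 0) \<longrightarrow>
    Lp_norm \<infinity> (restrict_space lebesgue (half_ball (R / 2))) (E_op \<alpha> \<beta> f)
      \<le> ennreal (C * R powr (\<alpha> + \<beta> - 1 - real DIM('a) * recip s)) * Lp_norm s lebesgue f"
proof -
  let ?e = "(\<alpha> - 1) - real DIM('a) * recip s"
  obtain C where C: "0 < C" "\<And>(f :: 'a \<Rightarrow> real) R xn x'. f \<in> borel_measurable lebesgue \<Longrightarrow>
      (\<forall>y. norm y < R \<longrightarrow> f y = 0) \<Longrightarrow> 0 < xn \<Longrightarrow> norm x' < R / 2 \<Longrightarrow>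
      ennreal \<bar>E_op \<alpha> \<beta> f (x', xn)\<bar> \<le> ennreal (C * xn powr \<beta> * R powr ?e) * Lp_norm s lebesgue f"
    using abs_E_op_le_outside_support[OF s \<gamma> hs] by blast
  show ?thesis
  proof (intro exI[of _ C] conjI allI impI Lp_norm_infinity_le measurable_restrict_space1)
    fix f :: "'a \<Rightarrow> real" and R :: real and z :: "'a \<times> real"
    assume "f \<in> borel_measurable lebesgue \<and> Lp_norm s lebesgue f < \<infinity> \<and> R > 0
      \<and> (\<forall>y. norm y < R \<longrightarrow> f y = 0)"
    then have f: "f \<in> borel_measurable lebesgue" and R: "0 < R" and supp: "\<forall>y. norm y < R \<longrightarrow> f y = 0"
      by auto
    then show "E_op \<alpha> \<beta> f \<in> borel_measurable lebesgue" by measurable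
    assume "z \<in> space (restrict_space lebesgue (half_ball (R / 2)))"
    then obtain x' xn where z: "z = (x', xn)" "0 < xn" "sqrt ((norm x')\<^sup>2 + xn\<^sup>2) < R / 2"
      by (cases z) (auto simp: half_ball_def)
    have "norm x' \<le> sqrt ((norm x')\<^sup>2 + xn\<^sup>2)" "xn \<le> sqrt ((norm x')\<^sup>2 + xn\<^sup>2)"
      by (simp_all add: real_le_rsqrt)
    then have "norm x' < R / 2" "xn \<le> R" using z(3) R by linarith+
    then have "C * xn powr \<beta> * R powr ?e \<le> C * R powr \<beta> * R powr ?e"
      using C(1) z(2) \<beta> by (intro mult_right_mono mult_left_mono powr_mono2) auto
    also have "\<dots> = C * R powr (\<alpha> + \<beta> - 1 - real DIM('a) * recip s)"
      using R by (simp add: mult.assoc powr_add[symmetric] algebra_simps)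
    finally have "ennreal (C * xn powr \<beta> * R powr ?e) * Lp_norm s lebesgue f
        \<le> ennreal (C * R powr (\<alpha> + \<beta> - 1 - real DIM('a) * recip s)) * Lp_norm s lebesgue f"
      by (intro mult_right_mono ennreal_leI) auto
    then show "ennreal \<bar>E_op \<alpha> \<beta> f z\<bar>
        \<le> ennreal (C * R powr (\<alpha> + \<beta> - 1 - real DIM('a) * recip s)) * Lp_norm s lebesgue f"
      using C(2)[OF f supp z(2) \<open>norm x' < R / 2\<close>] z(1) by simp
  qed (rule C(1))
qed

theorem lemma2p1:
  fixes n :: nat and \<alpha> \<beta> :: real and s t :: ereal
  assumes dim: "DIM('a::euclidean_space) = n - 1"
    and n3: "n \<ge> 3"
    and beta: "\<beta> \<ge> 0"
    and ab1: "0 < \<alpha> + \<beta>" and ab2: "\<alpha> + \<beta> < real n - \<beta>"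
    and ab3: "(real n - \<alpha> - 2 * \<beta>) / (2 * real n) + (real n - \<alpha>) / (2 * (real n - 1)) < 1"
    and s1: "1 \<le> s" and st: "s \<le> t"
  shows
   "(1 + recip t < (real n - \<alpha>) / (real n - 1) + recip s \<longrightarrow>
      (\<exists>C>0. \<forall>(f :: 'a \<Rightarrow> real) xn.
         f \<in> borel_measurable lebesgue \<and> Lp_norm s lebesgue f < \<infinity> \<and> xn > 0 \<longrightarrow>
         Lp_norm t lebesgue (\<lambda>x'. E_op \<alpha> \<beta> f (x', xn))
           \<le> ennreal (C * xn powr ((real n - 1) * (1 + recip t - recip s) - (real n - \<alpha> - \<beta>)))
              * Lp_norm s lebesgue f))
    \<and>
    (\<exists>C>0. \<forall>(f :: 'a \<Rightarrow> real) R x' xn.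
         integrable lebesgue f \<and> R > 0 \<and> (\<forall>y. norm y \<ge> R \<longrightarrow> f y = 0) \<and> xn > 0 \<longrightarrow>
         \<bar>E_op \<alpha> \<beta> f (x', xn)\<bar>
           \<le> C * xn powr \<beta> / ((max (norm x' - R) 0)\<^sup>2 + xn\<^sup>2) powr ((real n - \<alpha>) / 2)
              * (\<integral>y. \<bar>f y\<bar> \<partial>lebesgue))
    \<and>
    (recip s > (\<alpha> - 1) / (real n - 1) \<longrightarrow>
      (\<exists>C>0. \<forall>(f :: 'a \<Rightarrow> real) R xn.
         f \<in> borel_measurable lebesgue \<and> Lp_norm s lebesgue f < \<infinity> \<and> R > 0
         \<and> (\<forall>y. norm y < R \<longrightarrow> f y = 0) \<and> xn > 0 \<longrightarrow>
         Lp_norm \<infinity> (restrict_space lebesgue (ball 0 (R / 2))) (\<lambda>x'. E_op \<alpha> \<beta> f (x', xn))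
           \<le> ennreal (C * xn powr \<beta> * R powr ((\<alpha> - 1) - (real n - 1) * recip s))
              * Lp_norm s lebesgue f))
    \<and>
    (recip s > (\<alpha> - 1) / (real n - 1) \<and> recip s > (\<alpha> + \<beta> - 1) / (real n - 1) \<longrightarrow>
      (\<exists>C>0. \<forall>(f :: 'a \<Rightarrow> real) R.
         f \<in> borel_measurable lebesgue \<and> Lp_norm s lebesgue f < \<infinity> \<and> R > 0
         \<and> (\<forall>y. norm y < R \<longrightarrow> f y = 0) \<longrightarrow>
         Lp_norm \<infinity> (restrict_space lebesgue (half_ball (R / 2))) (E_op \<alpha> \<beta> f)
           \<le> ennreal (C * R powr (\<alpha> + \<beta> - 1 - (real n - 1) * recip s))
              * Lp_norm s lebesgue f))"
proof -
  have n: "real n = real DIM('a) + 1" using dim n3 by simp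
  have \<gamma>: "0 < real DIM('a) + 1 - \<alpha>" using ab2 beta n by linarith
  show ?thesis
    unfolding n add_diff_cancel_right'
    using E_op_slice_Lp_norm_le[OF s1 st \<gamma>] abs_E_op_le_compact_support[OF \<gamma>]
      E_op_ball_Linf_le[OF s1 \<gamma>] E_op_half_ball_Linf_le[OF s1 \<gamma> beta]
    by blast
qed

end
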